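(* Let $(X,d)$ be a pointed metric space and let $((x_n,y_n))_{n=1}^\infty$ be a sequence in $\widetilde X$ such that $d(x_n,y_n)\to 0$ as $n\to\infty$. Then for every $\varepsilon\in(0,1)$ there exists a subsequence $((x_{n_k},y_{n_k}))_{k=1}^\infty$ which is Lipschitz interpolating for $\mathrm{Lip}_0(X)$ and whose Lipschitz interpolation constant is at most $1/(1-\varepsilon)$.
   Context: All spaces are real. $(X,d)$ has a base point $0$, $\widetilde{X}=\{(x,y)\in X\times X: x\neq y\}$. $\mathrm{Lip}_0(X)$ is the Banach space of Lipschitz $f:X\to\mathbb{R}$ with $f(0)=0$, normed by $\|f\|=\sup_{(x,y)\in\widetilde X}|f(x)-f(y)|/d(x,y)$. A sequence $((u_k,v_k))_{k=1}^\infty$ in $\widetilde X$ is Lipschitz interpolating for $\mathrm{Lip}_0(X)$ if $T:\mathrm{Lip}_0(X)\to\ell_\infty$, $T(f)=\big((f(u_k)-f(v_k))/d(u_k,v_k)\big)_{k}$, is surjective; its Lipschitz interpolation constant is then $\inf\{K\geq 1: \forall\alpha\in\ell_\infty,\ \|\alpha\|_\infty\le 1,\ \exists f\in\mathrm{Lip}_0(X),\ \|f\|\le K,\ T(f)=\alpha\}$. *)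

theory Defs
  imports "HOL-Analysis.Analysis"
begin

definition Lip0 :: "'a::metric_space \<Rightarrow> ('a \<Rightarrow> real) set" where
  "Lip0 z0 = {f. (\<exists>L. L-lipschitz_on UNIV f) \<and> f z0 = 0}"

definition lipnorm :: "('a::metric_space \<Rightarrow> real) \<Rightarrow> real" where
  "lipnorm f = (SUP p\<in>{(x, y). x \<noteq> y}. \<bar>f (fst p) - f (snd p)\<bar> / dist (fst p) (snd p))"

definition slopes :: "(nat \<Rightarrow> 'a::metric_space) \<Rightarrow> (nat \<Rightarrow> 'a) \<Rightarrow> ('a \<Rightarrow> real) \<Rightarrow> nat \<Rightarrow> real" where
  "slopes u v f = (\<lambda>k. (f (u k) - f (v k)) / dist (u k) (v k))"

definition lip_interpolating :: "'a::metric_space \<Rightarrow> (nat \<Rightarrow> 'a) \<Rightarrow> (nat \<Rightarrow> 'a) \<Rightarrow> bool" where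
  "lip_interpolating z0 u v \<longleftrightarrow>
     (\<forall>\<alpha>::nat \<Rightarrow> real. (\<exists>B. \<forall>k. \<bar>\<alpha> k\<bar> \<le> B) \<longrightarrow> (\<exists>f\<in>Lip0 z0. slopes u v f = \<alpha>))"

definition lip_interp_const :: "'a::metric_space \<Rightarrow> (nat \<Rightarrow> 'a) \<Rightarrow> (nat \<Rightarrow> 'a) \<Rightarrow> real" where
  "lip_interp_const z0 u v = Inf {K. K \<ge> 1 \<and>
     (\<forall>\<alpha>::nat \<Rightarrow> real. (\<forall>k. \<bar>\<alpha> k\<bar> \<le> 1) \<longrightarrow>
        (\<exists>f\<in>Lip0 z0. lipnorm f \<le> K \<and> slopes u v f = \<alpha>))}"

end

theory Submission
  imports Defs
begin

(* Pass to a subsequence along which every pair (x_k, y_k) is very short compared with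
   all distances between distinct endpoints of the earlier pairs, with a budget of
   Lipschitz constants 1 <= K_0 < K_1 < ... < K = 1/(1 - eps).  Given alpha with
   |alpha_k| <= 1, assign values pair by pair: the value t at y_k is free, the value at
   x_k is t + alpha_k d(x_k, y_k).  The values of t compatible with a K_(k+1)-Lipschitz
   extension of the earlier values form a family of intervals which, by shortness of the
   pair, intersect pairwise and hence have a common point.  McShane's extension of the
   resulting K-Lipschitz family, shifted to vanish at the base point, realises alpha with
   norm at most K, and rescaling handles arbitrary bounded alpha. *)

lemma common_point_of_intervals:
  fixes l h :: "'i \<Rightarrow> real"
  assumes "\<forall>i\<in>I. \<forall>j\<in>I. l i \<le> h j"
  shows "\<exists>t. \<forall>i\<in>I. l i \<le> t \<and> t \<le> h i"
proof (cases "I = {}")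
  case False
  then obtain j where "j \<in> I" by blast
  then have "bdd_above (l ` I)" using assms by (auto intro!: bdd_aboveI2[where M = "h j"])
  then show ?thesis
    using assms False by (intro exI[of _ "SUP i\<in>I. l i"]) (auto intro: cSUP_upper cSUP_least)
qed simp

lemma mcshane_extension:
  fixes P :: "'i \<Rightarrow> 'a::metric_space" and V :: "'i \<Rightarrow> real"
  assumes lip: "\<And>a b. \<bar>V a - V b\<bar> \<le> K * dist (P a) (P b)" and "K \<ge> 0"
  shows "\<exists>F. K-lipschitz_on UNIV F \<and> (\<forall>a. F (P a) = V a)"
proof -
  define F where "F z = (INF a. V a + K * dist z (P a))" for z
  have bdd: "bdd_below (range (\<lambda>a. V a + K * dist z (P a)))" for z
  proof (rule bdd_belowI2)
    fix a and a0 :: 'i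
    have "V a0 - V a \<le> K * dist (P a0) (P a)" using lip[of a0 a] by linarith
    also have "\<dots> \<le> K * (dist z (P a0) + dist z (P a))"
      using \<open>K \<ge> 0\<close> by (intro mult_left_mono dist_triangle3) auto
    finally show "V a0 - K * dist z (P a0) \<le> V a + K * dist z (P a)" by (simp add: algebra_simps)
  qed
  have F_le: "F z \<le> V a + K * dist z (P a)" for z a
    unfolding F_def by (rule cInf_lower[OF _ bdd]) auto
  have F_ge: "c \<le> F z" if "\<And>a. c \<le> V a + K * dist z (P a)" for z c
    unfolding F_def using that by (intro cINF_greatest) auto
  have F_P: "F (P a) = V a" for a
  proof (rule antisym)
    show "F (P a) \<le> V a" using F_le[of "P a" a] by simp
    show "V a \<le> F (P a)" using lip[of a] by (intro F_ge) (simp add: abs_le_iff algebra_simps)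
  qed
  have F_shift: "F z \<le> F z' + K * dist z z'" for z z'
  proof -
    have "F z - K * dist z z' \<le> F z'"
    proof (rule F_ge)
      fix a
      have "K * dist z (P a) \<le> K * (dist z' (P a) + dist z z')"
        using \<open>K \<ge> 0\<close> dist_triangle[of z "P a" z'] by (intro mult_left_mono) (auto simp: dist_commute)
      then show "F z - K * dist z z' \<le> V a + K * dist z' (P a)"
        using F_le[of z a] by (simp add: algebra_simps)
    qed
    then show ?thesis by simp
  qed
  have "K-lipschitz_on UNIV F"
  proof (rule lipschitz_onI)
    fix z z' :: 'a
    show "dist (F z) (F z') \<le> K * dist z z'"
      using F_shift[of z z'] F_shift[of z' z] by (simp add: dist_real_def dist_commute abs_le_iff)
  qed (rule \<open>K \<ge> 0\<close>)
  with F_P show ?thesis by blast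
qed

lemma prefix_choice:
  fixes P :: "nat \<Rightarrow> (nat \<Rightarrow> 'b) \<Rightarrow> bool"
  assumes "P 0 g0"
    and step: "\<And>n g. P n g \<Longrightarrow> \<exists>b. P (Suc n) (g(n := b))"
    and prefix: "\<And>n g g'. P n g \<Longrightarrow> (\<And>i. i < n \<Longrightarrow> g i = g' i) \<Longrightarrow> P n g'"
  shows "\<exists>g. \<forall>n. P n g"
proof -
  have "\<exists>f. \<forall>n. P n (f n) \<and> (\<exists>b. f (Suc n) = (f n)(n := b))"
  proof (rule dependent_nat_choice)
    fix n g assume "P n g"
    then obtain b where "P (Suc n) (g(n := b))" using step by blast
    then show "\<exists>g'. P (Suc n) g' \<and> (\<exists>b. g' = g(n := b))" by blast
  qed (use assms(1) in blast)
  then obtain f where f: "\<And>n. P n (f n)" and f_Suc: "\<And>n. \<exists>b. f (Suc n) = (f n)(n := b)"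
    by blast
  have stable: "f m i = f (Suc i) i" if "i < m" for m i
    using that
  proof (induction m)
    case (Suc m)
    then show ?case using f_Suc[of m] by (cases "i = m") auto
  qed simp
  have "P n (\<lambda>i. f (Suc i) i)" for n by (rule prefix[OF f[of n]]) (rule stable)
  then show ?thesis by blast
qed

lemma lipnorm_le_if_lipschitz:
  fixes f :: "'a::metric_space \<Rightarrow> real" and a b :: 'a
  assumes "K-lipschitz_on UNIV f" and "a \<noteq> b"
  shows "lipnorm f \<le> K"
  unfolding lipnorm_def
proof (rule cSUP_least)
  have "(a, b) \<in> {(x, y). x \<noteq> y}"
    using assms(2) by simp
  then show "{(x, y). x \<noteq> y} \<noteq> ({} :: ('a \<times> 'a) set)"
    by blast
next
  fix p :: "'a \<times> 'a" assume "p \<in> {(x, y). x \<noteq> y}"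
  then have "0 < dist (fst p) (snd p)" by auto
  moreover have "\<bar>f (fst p) - f (snd p)\<bar> \<le> K * dist (fst p) (snd p)"
    using lipschitz_onD[OF assms(1)] by (simp add: dist_real_def)
  ultimately show "\<bar>f (fst p) - f (snd p)\<bar> / dist (fst p) (snd p) \<le> K"
    by (simp add: pos_divide_le_eq)
qed

lemma Lip0_cmult: "f \<in> Lip0 z0 \<Longrightarrow> (\<lambda>z. c * f z) \<in> Lip0 z0"
  unfolding Lip0_def by (auto intro: lipschitz_on_cmult_real)

lemma slopes_cmult: "slopes u w (\<lambda>z. c * f z) = (\<lambda>k. c * slopes u w f k)"
  by (simp add: slopes_def right_diff_distrib)

lemma lip_interpolating_if_unit_ball:
  assumes "\<And>\<alpha>. (\<And>k. \<bar>\<alpha> k\<bar> \<le> 1) \<Longrightarrow> \<exists>f\<in>Lip0 z0. slopes u w f = \<alpha>"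
  shows "lip_interpolating z0 u w"
  unfolding lip_interpolating_def
proof (intro allI impI)
  fix \<alpha> :: "nat \<Rightarrow> real" assume "\<exists>B. \<forall>k. \<bar>\<alpha> k\<bar> \<le> B"
  then obtain B where "B \<ge> 1" "\<And>k. \<bar>\<alpha> k\<bar> \<le> B" by (meson max.cobounded1 max.cobounded2 order.trans)
  then have "\<bar>\<alpha> k / B\<bar> \<le> 1" for k by (simp add: abs_divide)
  then obtain f where "f \<in> Lip0 z0" "slopes u w f = (\<lambda>k. \<alpha> k / B)" using assms[of "\<lambda>k. \<alpha> k / B"] by blast
  with \<open>B \<ge> 1\<close> show "\<exists>f\<in>Lip0 z0. slopes u w f = \<alpha>"
    by (intro bexI[of _ "\<lambda>z. B * f z"]) (simp_all add: Lip0_cmult slopes_cmult)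
qed

lemma lip_interp_const_le:
  assumes "1 \<le> K"
    and "\<And>\<alpha>. (\<And>k. \<bar>\<alpha> k\<bar> \<le> 1) \<Longrightarrow> \<exists>f\<in>Lip0 z0. lipnorm f \<le> K \<and> slopes u w f = \<alpha>"
  shows "lip_interp_const z0 u w \<le> K"
  unfolding lip_interp_const_def using assms by (intro cInf_lower bdd_belowI[of _ 1]) auto

(* Endpoints are indexed by bool \<times> nat (True for u i, False for w i) rather than by points:
   endpoints of different pairs may coincide, and the Lipschitz bound then forces their values
   to agree. *)
definition endpoint :: "(nat \<Rightarrow> 'a) \<Rightarrow> (nat \<Rightarrow> 'a) \<Rightarrow> bool \<times> nat \<Rightarrow> 'a" where
  "endpoint u w = (\<lambda>(s, i). if s then u i else w i)"

definition endpoint_value ::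
    "(nat \<Rightarrow> 'a::metric_space) \<Rightarrow> (nat \<Rightarrow> 'a) \<Rightarrow> (nat \<Rightarrow> real) \<Rightarrow> (nat \<Rightarrow> real) \<Rightarrow> bool \<times> nat \<Rightarrow> real" where
  "endpoint_value u w \<alpha> c = (\<lambda>(s, i). if s then c i + \<alpha> i * dist (u i) (w i) else c i)"

(* The factor (K' + 1) / (K' - K) is the room two_point_extension needs to raise the
   Lipschitz constant from K to K' when the n-th pair is added. *)
definition short_pair :: "real \<Rightarrow> real \<Rightarrow> (nat \<Rightarrow> 'a::metric_space) \<Rightarrow> (nat \<Rightarrow> 'a) \<Rightarrow> nat \<Rightarrow> bool" where
  "short_pair K K' u w n \<longleftrightarrow>
     (\<forall>a\<in>UNIV \<times> {..<n}. \<forall>b\<in>UNIV \<times> {..<n}. endpoint u w a \<noteq> endpoint u w b \<longrightarrow>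
        (K' + 1) * dist (u n) (w n) \<le> (K' - K) * dist (endpoint u w a) (endpoint u w b))"

definition prefix_lipschitz ::
    "real \<Rightarrow> (nat \<Rightarrow> 'a::metric_space) \<Rightarrow> (nat \<Rightarrow> 'a) \<Rightarrow> (nat \<Rightarrow> real) \<Rightarrow> (nat \<Rightarrow> real) \<Rightarrow> nat \<Rightarrow> bool" where
  "prefix_lipschitz K u w \<alpha> c n \<longleftrightarrow>
     (\<forall>a\<in>UNIV \<times> {..<n}. \<forall>b\<in>UNIV \<times> {..<n}.
        \<bar>endpoint_value u w \<alpha> c a - endpoint_value u w \<alpha> c b\<bar> \<le> K * dist (endpoint u w a) (endpoint u w b))"

lemma short_pair_cross_bound:
  fixes p q u w :: "'a::metric_space"
  assumes lip: "\<bar>s\<bar> \<le> K * dist p q"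
    and short: "p \<noteq> q \<Longrightarrow> (K' + 1) * dist u w \<le> (K' - K) * dist p q"
    and "K \<le> K'" "1 \<le> K'"
  shows "\<bar>s\<bar> + dist u w \<le> K' * (dist w p + dist u q)"
proof (cases "p = q")
  case True
  have "dist u w \<le> dist w p + dist u p"
    using dist_triangle3[of u w p] by (simp add: dist_commute)
  then have "\<bar>s\<bar> + dist u w \<le> dist w p + dist u q"
    using lip True by simp
  also have "\<dots> \<le> K' * (dist w p + dist u q)"
    using mult_right_mono[OF \<open>1 \<le> K'\<close>, of "dist w p + dist u q"] by simp
  finally show ?thesis .
next
  case False
  have "dist p q \<le> dist w p + dist u w + dist u q"
    using dist_triangle[of p q w] dist_triangle[of w q u] by (simp add: dist_commute)
  then have "K' * (dist p q - dist u w) \<le> K' * (dist w p + dist u q)"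
    using \<open>1 \<le> K'\<close> by (intro mult_left_mono) auto
  moreover have "\<bar>s\<bar> + dist u w \<le> K' * (dist p q - dist u w)"
    using lip short[OF False] by (simp add: algebra_simps)
  ultimately show ?thesis by linarith
qed

lemma two_point_extension:
  fixes P :: "'i \<Rightarrow> 'a::metric_space" and V :: "'i \<Rightarrow> real"
  assumes lip: "\<And>a b. a \<in> I \<Longrightarrow> b \<in> I \<Longrightarrow> \<bar>V a - V b\<bar> \<le> K * dist (P a) (P b)"
    and short: "\<And>a b. a \<in> I \<Longrightarrow> b \<in> I \<Longrightarrow> P a \<noteq> P b \<Longrightarrow>
                  (K' + 1) * dist u w \<le> (K' - K) * dist (P a) (P b)"
    and "K \<le> K'" "1 \<le> K'" and "\<bar>\<beta>\<bar> \<le> dist u w"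
  shows "\<exists>t. \<forall>a\<in>I. \<bar>t - V a\<bar> \<le> K' * dist w (P a) \<and> \<bar>t + \<beta> - V a\<bar> \<le> K' * dist u (P a)"
proof -
  have cross: "\<bar>V a - V b\<bar> + dist u w \<le> K' * dist w (P a) + K' * dist u (P b)"
    if "a \<in> I" "b \<in> I" for a b
    using short_pair_cross_bound[of "V a - V b" K "P a" "P b" K' u w] lip[OF that] short[OF that] assms(3,4)
    by (simp add: distrib_left)
  have same: "\<bar>V a - V b\<bar> \<le> K' * dist z (P a) + K' * dist z (P b)" if "a \<in> I" "b \<in> I" for a b z
  proof -
    have "\<bar>V a - V b\<bar> \<le> K' * dist (P a) (P b)"
      using lip[OF that] mult_right_mono[OF \<open>K \<le> K'\<close> zero_le_dist[of "P a" "P b"]] by linarith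
    also have "\<dots> \<le> K' * dist z (P a) + K' * dist z (P b)"
      using mult_left_mono[OF dist_triangle3[of "P a" "P b" z], of K'] \<open>1 \<le> K'\<close>
      by (simp add: distrib_left)
    finally show ?thesis .
  qed
  define lo where "lo = (\<lambda>(s, a). if s then V a - \<beta> - K' * dist u (P a) else V a - K' * dist w (P a))"
  define hi where "hi = (\<lambda>(s, a). if s then V a - \<beta> + K' * dist u (P a) else V a + K' * dist w (P a))"
  have lo_hi: "lo (s, a) \<le> hi (t, b)" if "a \<in> I" "b \<in> I" for s t a b
  proof -
    have "V a - V b \<le> \<bar>V a - V b\<bar>" "V b - V a \<le> \<bar>V a - V b\<bar>" "\<bar>\<beta>\<bar> \<le> dist u w"
      using assms(5) by auto
    then show ?thesis
      using same[OF that, of u] same[OF that, of w] cross[OF that] cross[OF that(2,1)]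
      by (cases s; cases t) (simp_all add: lo_def hi_def abs_le_iff abs_minus_commute)
  qed
  then have "\<forall>i\<in>UNIV \<times> I. \<forall>j\<in>UNIV \<times> I. lo i \<le> hi j"
    by (simp add: mem_Times_iff split_paired_all)
  then obtain t where t: "\<forall>i\<in>UNIV \<times> I. lo i \<le> t \<and> t \<le> hi i"
    by (rule common_point_of_intervals[THEN exE])
  show ?thesis
  proof (intro exI[of _ t] ballI)
    fix a assume "a \<in> I"
    then show "\<bar>t - V a\<bar> \<le> K' * dist w (P a) \<and> \<bar>t + \<beta> - V a\<bar> \<le> K' * dist u (P a)"
      using t[THEN bspec, of "(True, a)"] t[THEN bspec, of "(False, a)"]
      by (simp add: lo_def hi_def abs_le_iff)
  qed
qed

lemma prefix_lipschitz_cong: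
  assumes "\<And>i. i < n \<Longrightarrow> c i = c' i"
  shows "prefix_lipschitz K u w \<alpha> c n \<longleftrightarrow> prefix_lipschitz K u w \<alpha> c' n"
proof -
  have "endpoint_value u w \<alpha> c a = endpoint_value u w \<alpha> c' a" if "a \<in> UNIV \<times> {..<n}" for a
    using that assms by (auto simp: endpoint_value_def)
  then show ?thesis
    unfolding prefix_lipschitz_def by simp
qed

lemma prefix_lipschitz_mono:
  assumes "prefix_lipschitz K u w \<alpha> c n" and "K \<le> K'"
  shows "prefix_lipschitz K' u w \<alpha> c n"
  using assms unfolding prefix_lipschitz_def by (meson mult_right_mono order_trans zero_le_dist)

lemma prefix_lipschitz_SucI:
  fixes u w :: "nat \<Rightarrow> 'a::metric_space"
  assumes old: "prefix_lipschitz K u w \<alpha> c n"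
    and new_old: "\<And>s a. a \<in> UNIV \<times> {..<n} \<Longrightarrow>
      \<bar>endpoint_value u w \<alpha> c (s, n) - endpoint_value u w \<alpha> c a\<bar> \<le> K * dist (endpoint u w (s, n)) (endpoint u w a)"
    and "\<bar>\<alpha> n\<bar> \<le> K"
  shows "prefix_lipschitz K u w \<alpha> c (Suc n)"
proof -
  let ?P = "endpoint u w" and ?V = "endpoint_value u w \<alpha> c"
  have new_new: "\<bar>?V (s, n) - ?V (s', n)\<bar> \<le> K * dist (?P (s, n)) (?P (s', n))" for s s'
  proof -
    have "\<bar>\<alpha> n * dist (u n) (w n)\<bar> \<le> K * dist (u n) (w n)"
      using mult_right_mono[OF \<open>\<bar>\<alpha> n\<bar> \<le> K\<close> zero_le_dist] by (simp add: abs_mult)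
    then show ?thesis
      by (cases s; cases s') (simp_all add: endpoint_def endpoint_value_def dist_commute)
  qed
  have "\<bar>?V a - ?V b\<bar> \<le> K * dist (?P a) (?P b)"
    if "a \<in> UNIV \<times> {..<Suc n}" "b \<in> UNIV \<times> {..<Suc n}" for a b
  proof -
    have "a \<in> UNIV \<times> {..<n} \<or> a = (fst a, n)" "b \<in> UNIV \<times> {..<n} \<or> b = (fst b, n)"
      using that by (auto simp: less_Suc_eq)
    then show ?thesis
      using old new_new new_old[of a] new_old[of b] unfolding prefix_lipschitz_def
      by (metis abs_minus_commute dist_commute)
  qed
  then show ?thesis
    unfolding prefix_lipschitz_def by blast
qed

lemma prefix_lipschitz_Suc:
  fixes u w :: "nat \<Rightarrow> 'a::metric_space"
  assumes lip: "prefix_lipschitz K u w \<alpha> c n" and short: "short_pair K K' u w n"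
    and "K \<le> K'" "1 \<le> K'" and "\<bar>\<alpha> n\<bar> \<le> 1"
  shows "\<exists>t. prefix_lipschitz K' u w \<alpha> (c(n := t)) (Suc n)"
proof -
  let ?I = "UNIV \<times> {..<n}" and ?P = "endpoint u w" and ?V = "endpoint_value u w \<alpha> c"
  define e where "e = dist (u n) (w n)"
  have "\<bar>\<alpha> n * e\<bar> \<le> e"
    using \<open>\<bar>\<alpha> n\<bar> \<le> 1\<close> by (simp add: e_def abs_mult mult_left_le_one_le)
  have "\<exists>t. \<forall>a\<in>?I. \<bar>t - ?V a\<bar> \<le> K' * dist (w n) (?P a) \<and> \<bar>t + \<alpha> n * e - ?V a\<bar> \<le> K' * dist (u n) (?P a)"
  proof (rule two_point_extension)
    show "\<bar>?V a - ?V b\<bar> \<le> K * dist (?P a) (?P b)" if "a \<in> ?I" "b \<in> ?I" for a b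
      using lip that unfolding prefix_lipschitz_def by blast
    show "(K' + 1) * dist (u n) (w n) \<le> (K' - K) * dist (?P a) (?P b)"
      if "a \<in> ?I" "b \<in> ?I" "?P a \<noteq> ?P b" for a b
      using short that unfolding short_pair_def by blast
  qed (use assms(3,4) \<open>\<bar>\<alpha> n * e\<bar> \<le> e\<close> e_def in auto)
  then obtain t where t: "\<And>a. a \<in> ?I \<Longrightarrow>
      \<bar>t - ?V a\<bar> \<le> K' * dist (w n) (?P a) \<and> \<bar>t + \<alpha> n * e - ?V a\<bar> \<le> K' * dist (u n) (?P a)"
    by blast
  let ?V' = "endpoint_value u w \<alpha> (c(n := t))"
  have old: "?V' a = ?V a" if "a \<in> ?I" for a
    using that by (auto simp: endpoint_value_def)
  have "prefix_lipschitz K' u w \<alpha> (c(n := t)) n"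
    using prefix_lipschitz_mono[OF lip \<open>K \<le> K'\<close>] by (subst prefix_lipschitz_cong[of n _ c]) auto
  moreover have "\<bar>?V' (s, n) - ?V' a\<bar> \<le> K' * dist (?P (s, n)) (?P a)" if "a \<in> ?I" for s a
    using t[OF that] old[OF that] by (cases s) (simp_all add: endpoint_def endpoint_value_def e_def)
  moreover have "\<bar>\<alpha> n\<bar> \<le> K'"
    using assms(4,5) by linarith
  ultimately show ?thesis
    by (blast intro: prefix_lipschitz_SucI)
qed

lemma prefix_lipschitz_values_exist:
  fixes u w :: "nat \<Rightarrow> 'a::metric_space"
  assumes "\<And>k. short_pair (Ks k) (Ks (Suc k)) u w k"
    and "\<And>k. Ks k \<le> Ks (Suc k)" "\<And>k. 1 \<le> Ks k" and "\<And>k. \<bar>\<alpha> k\<bar> \<le> 1"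
  shows "\<exists>c. \<forall>n. prefix_lipschitz (Ks n) u w \<alpha> c n"
proof (rule prefix_choice)
  show "prefix_lipschitz (Ks 0) u w \<alpha> (\<lambda>_. 0) 0"
    by (simp add: prefix_lipschitz_def)
  show "\<exists>t. prefix_lipschitz (Ks (Suc n)) u w \<alpha> (c(n := t)) (Suc n)"
    if "prefix_lipschitz (Ks n) u w \<alpha> c n" for n c
    using prefix_lipschitz_Suc[OF that] assms by blast
  show "prefix_lipschitz (Ks n) u w \<alpha> c' n"
    if "prefix_lipschitz (Ks n) u w \<alpha> c n" "\<And>i. i < n \<Longrightarrow> c i = c' i" for n c c'
    using that prefix_lipschitz_cong by blast
qed

lemma short_pairs_interpolate:
  fixes u w :: "nat \<Rightarrow> 'a::metric_space"
  assumes "\<And>n. u n \<noteq> w n"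
    and "\<And>k. short_pair (Ks k) (Ks (Suc k)) u w k"
    and "\<And>k. Ks k \<le> Ks (Suc k)" "\<And>k. 1 \<le> Ks k" "\<And>k. Ks k \<le> K"
    and "\<And>k. \<bar>\<alpha> k\<bar> \<le> 1"
  shows "\<exists>f\<in>Lip0 z0. lipnorm f \<le> K \<and> slopes u w f = \<alpha>"
proof -
  obtain c where c: "\<And>n. prefix_lipschitz (Ks n) u w \<alpha> c n"
    using prefix_lipschitz_values_exist[of Ks u w \<alpha>, OF assms(2-4,6)] by blast
  let ?P = "endpoint u w" and ?V = "endpoint_value u w \<alpha> c"
  have "\<bar>?V a - ?V b\<bar> \<le> K * dist (?P a) (?P b)" for a b
  proof -
    define n where "n = Suc (max (snd a) (snd b))"
    have "a \<in> UNIV \<times> {..<n}" "b \<in> UNIV \<times> {..<n}"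
      by (auto simp: n_def mem_Times_iff)
    then have "\<bar>?V a - ?V b\<bar> \<le> Ks n * dist (?P a) (?P b)"
      using c[of n] unfolding prefix_lipschitz_def by blast
    also have "\<dots> \<le> K * dist (?P a) (?P b)"
      using assms(5) by (simp add: mult_right_mono)
    finally show ?thesis .
  qed
  moreover have "0 \<le> K"
    using assms(4,5)[of 0] by linarith
  ultimately obtain F where F: "K-lipschitz_on UNIV F" "\<And>a. F (?P a) = ?V a"
    using mcshane_extension[of ?V K ?P] by blast
  define f where "f z = F z - F z0" for z
  have "K-lipschitz_on UNIV f"
    using lipschitz_on_diff[OF F(1) lipschitz_on_constant] by (simp add: f_def)
  then have "f \<in> Lip0 z0" and "lipnorm f \<le> K"
    using lipnorm_le_if_lipschitz[of K f "u 0" "w 0"] assms(1)[of 0] unfolding Lip0_def f_def by auto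
  moreover have "slopes u w f = \<alpha>"
  proof
    fix k
    have "f (u k) - f (w k) = F (?P (True, k)) - F (?P (False, k))"
      by (simp add: f_def endpoint_def)
    also have "\<dots> = \<alpha> k * dist (u k) (w k)"
      by (simp add: F(2) endpoint_value_def)
    finally show "slopes u w f k = \<alpha> k"
      using assms(1)[of k] by (simp add: slopes_def)
  qed
  ultimately show ?thesis by blast
qed

lemma eventually_dist_le_gaps:
  fixes P :: "'i \<Rightarrow> 'a::metric_space"
  assumes "finite I" and "(\<lambda>m. dist (x m) (y m)) \<longlonglongrightarrow> 0" and "0 < b"
  shows "eventually (\<lambda>m. \<forall>i\<in>I. \<forall>j\<in>I. P i \<noteq> P j \<longrightarrow> a * dist (x m) (y m) \<le> b * dist (P i) (P j))
           sequentially"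
proof -
  have lim: "(\<lambda>m. a * dist (x m) (y m)) \<longlonglongrightarrow> 0"
    using tendsto_mult_right_zero[OF assms(2)] by simp
  have "eventually (\<lambda>m. P i \<noteq> P j \<longrightarrow> a * dist (x m) (y m) \<le> b * dist (P i) (P j)) sequentially"
    for i j
  proof (cases "P i = P j")
    case False
    then have "0 < b * dist (P i) (P j)"
      using \<open>0 < b\<close> by simp
    with lim have "eventually (\<lambda>m. a * dist (x m) (y m) < b * dist (P i) (P j)) sequentially"
      by (rule order_tendstoD(2))
    then show ?thesis
      by (rule eventually_mono) simp
  qed simp
  then show ?thesis
    using \<open>finite I\<close> by (intro eventually_ball_finite ballI) auto
qed

lemma short_pair_cong:
  assumes "\<And>i. i \<le> n \<Longrightarrow> u i = u' i" and "\<And>i. i \<le> n \<Longrightarrow> w i = w' i"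
  shows "short_pair K K' u w n \<longleftrightarrow> short_pair K K' u' w' n"
proof -
  have "endpoint u w a = endpoint u' w' a" if "a \<in> UNIV \<times> {..<n}" for a
    using that assms by (auto simp: endpoint_def)
  then show ?thesis
    using assms[of n] unfolding short_pair_def by simp
qed

lemma eventually_short_pair_fun_upd:
  fixes x y :: "nat \<Rightarrow> 'a::metric_space"
  assumes lim: "(\<lambda>n. dist (x n) (y n)) \<longlonglongrightarrow> 0" and "K < K'"
  shows "eventually (\<lambda>m. short_pair K K' (x \<circ> r(n := m)) (y \<circ> r(n := m)) n) sequentially"
proof -
  let ?E = "endpoint (x \<circ> r) (y \<circ> r)"
  have "endpoint (x \<circ> r(n := m)) (y \<circ> r(n := m)) a = ?E a" if "a \<in> UNIV \<times> {..<n}" for a m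
    using that by (auto simp: endpoint_def)
  moreover have "eventually (\<lambda>m. \<forall>a\<in>UNIV \<times> {..<n}. \<forall>b\<in>UNIV \<times> {..<n}. ?E a \<noteq> ?E b \<longrightarrow>
      (K' + 1) * dist (x m) (y m) \<le> (K' - K) * dist (?E a) (?E b)) sequentially"
    using \<open>K < K'\<close> by (intro eventually_dist_le_gaps lim) auto
  ultimately show ?thesis
    by (elim eventually_mono) (simp add: short_pair_def)
qed

lemma short_pairs_subsequence:
  fixes x y :: "nat \<Rightarrow> 'a::metric_space"
  assumes lim: "(\<lambda>n. dist (x n) (y n)) \<longlonglongrightarrow> 0" and "\<And>k. Ks k < Ks (Suc k)"
  shows "\<exists>r. strict_mono r \<and> (\<forall>k. short_pair (Ks k) (Ks (Suc k)) (x \<circ> r) (y \<circ> r) k)"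
proof -
  define Q where "Q n r \<longleftrightarrow> (\<forall>i. Suc i < n \<longrightarrow> r i < r (Suc i)) \<and>
                           (\<forall>k<n. short_pair (Ks k) (Ks (Suc k)) (x \<circ> r) (y \<circ> r) k)"
    for n and r :: "nat \<Rightarrow> nat"
  have prefix: "Q n r'" if "Q n r" and agree: "\<And>i. i < n \<Longrightarrow> r i = r' i" for n r r'
  proof -
    have "short_pair (Ks k) (Ks (Suc k)) (x \<circ> r) (y \<circ> r) k \<longleftrightarrow>
          short_pair (Ks k) (Ks (Suc k)) (x \<circ> r') (y \<circ> r') k" if "k < n" for k
      using that agree by (intro short_pair_cong) auto
    moreover have "r i = r' i \<and> r (Suc i) = r' (Suc i)" if "Suc i < n" for i
      using that agree by simp
    ultimately show ?thesis
      using \<open>Q n r\<close> unfolding Q_def by simp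
  qed
  have step: "\<exists>m. Q (Suc n) (r(n := m))" if "Q n r" for n r
  proof -
    obtain m where "short_pair (Ks n) (Ks (Suc n)) (x \<circ> r(n := m)) (y \<circ> r(n := m)) n"
        and "r (n - 1) < m"
      using eventually_happens'[OF sequentially_bot eventually_conj,
          OF eventually_short_pair_fun_upd[OF lim assms(2)] eventually_gt_at_top] by blast
    moreover have "Q n (r(n := m))"
      using prefix[OF \<open>Q n r\<close>] by simp
    ultimately have "Q (Suc n) (r(n := m))"
      unfolding Q_def by (auto simp: less_Suc_eq)
    then show ?thesis by blast
  qed
  have "\<exists>r. \<forall>n. Q n r"
    by (rule prefix_choice[of Q id, OF _ step prefix]) (simp add: Q_def)
  then obtain r where Q_r: "\<And>n. Q n r" by blast
  have "r i < r (Suc i)" for i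
    using Q_r[of "Suc (Suc i)"] unfolding Q_def by blast
  moreover have "short_pair (Ks k) (Ks (Suc k)) (x \<circ> r) (y \<circ> r) k" for k
    using Q_r[of "Suc k"] unfolding Q_def by blast
  ultimately show ?thesis
    unfolding strict_mono_Suc_iff by blast
qed

lemma unit_ball_interpolating_subsequence:
  fixes z :: "'a::metric_space" and x y :: "nat \<Rightarrow> 'a"
  assumes "\<And>n. x n \<noteq> y n" and "(\<lambda>n. dist (x n) (y n)) \<longlonglongrightarrow> 0" and "1 < K"
  obtains r where "strict_mono r"
    and "\<And>\<alpha>. (\<And>k. \<bar>\<alpha> k\<bar> \<le> 1) \<Longrightarrow> \<exists>f\<in>Lip0 z. lipnorm f \<le> K \<and> slopes (x \<circ> r) (y \<circ> r) f = \<alpha>"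
proof -
  define Ks where "Ks k = K - (K - 1) / 2 ^ k" for k :: nat
  have Ks_less: "Ks k < Ks (Suc k)" for k
    using \<open>1 < K\<close> by (simp add: Ks_def field_simps)
  have "0 \<le> (K - 1) / 2 ^ k" and "(K - 1) / 2 ^ k \<le> K - 1" for k :: nat
    using \<open>1 < K\<close> by (simp_all add: divide_le_eq)
  then have Ks_bounds: "1 \<le> Ks k" "Ks k \<le> K" for k
    unfolding Ks_def by (smt (verit))+
  obtain r where "strict_mono r" and short: "\<And>k. short_pair (Ks k) (Ks (Suc k)) (x \<circ> r) (y \<circ> r) k"
    using short_pairs_subsequence[of x y Ks, OF assms(2) Ks_less] by blast
  moreover have "\<exists>f\<in>Lip0 z. lipnorm f \<le> K \<and> slopes (x \<circ> r) (y \<circ> r) f = \<alpha>"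
    if "\<And>k. \<bar>\<alpha> k\<bar> \<le> 1" for \<alpha>
    by (rule short_pairs_interpolate[OF _ short less_imp_le[OF Ks_less] Ks_bounds that])
      (simp add: assms(1))
  ultimately show ?thesis using that by blast
qed

theorem theorem4p4:
  fixes z0 :: "'a::metric_space" and x y :: "nat \<Rightarrow> 'a" and \<epsilon> :: real
  assumes "\<And>n. x n \<noteq> y n"
    and "(\<lambda>n. dist (x n) (y n)) \<longlonglongrightarrow> 0"
    and "0 < \<epsilon>" and "\<epsilon> < 1"
  shows "\<exists>r::nat \<Rightarrow> nat. strict_mono r \<and>
           lip_interpolating z0 (x \<circ> r) (y \<circ> r) \<and>
           lip_interp_const z0 (x \<circ> r) (y \<circ> r) \<le> 1 / (1 - \<epsilon>)"
proof -
  have K: "1 < 1 / (1 - \<epsilon>)"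
    using assms(3,4) by simp
  obtain r where "strict_mono r" and unit_ball: "\<And>\<alpha>. (\<And>k. \<bar>\<alpha> k\<bar> \<le> 1) \<Longrightarrow>
      \<exists>f\<in>Lip0 z0. lipnorm f \<le> 1 / (1 - \<epsilon>) \<and> slopes (x \<circ> r) (y \<circ> r) f = \<alpha>"
    using unit_ball_interpolating_subsequence[where z = z0, OF assms(1,2) K] by blast
  have "lip_interpolating z0 (x \<circ> r) (y \<circ> r)"
    by (rule lip_interpolating_if_unit_ball) (use unit_ball in blast)
  moreover have "lip_interp_const z0 (x \<circ> r) (y \<circ> r) \<le> 1 / (1 - \<epsilon>)"
    by (rule lip_interp_const_le[OF less_imp_le[OF K] unit_ball])
  ultimately show ?thesis
    using \<open>strict_mono r\<close> by blast
qed

end
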